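(* Let $b<1/2$, $c>0$, and let $f$ be a real-valued function on $[1,\infty)$ with $f(x)\le c\,x^b$ for all $x\ge 1$. Then there is a constant $C$ depending only on $c$ and $b$ such that for every integer $N\ge 2$, $$ \sum_{1\le j\le \pi(N)} p_j^{-1/2} f(N/p_j) \le \frac{C\,N^{1/2}}{\log N}, $$ where $p_1=2<p_2<\dots$ is the increasing sequence of all primes and $\pi(N)$ is the number of primes $\le N$. *)

theory Defs
  imports "HOL-Analysis.Analysis" "HOL-Computational_Algebra.Primes"
begin

end

theory Submission
  imports Defs
begin

text \<open>
  Since N/p \<ge> 1 we may replace b by max b 0, so that the sum is at most c N^b S(N) with
  S(N) the sum of p^(-a) over the primes p \<le> N and a = 1/2 + b \<in> [0,1).  The primes in
  (m+1, 2m+1] divide binomial(2m+1, m) \<le> 4^m, so by induction the product of the primes up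
  to n is at most 4^n, i.e. \<theta>(n) \<le> n ln 4.  Partial summation against \<theta> then bounds the
  sum of p^(-a) ln p over p \<le> N by O(N^(1-a)).  Primes p > \<surd>N satisfy ln N < 2 ln p,
  while the primes p \<le> \<surd>N contribute only O(N^((1-a)/2)) to S(N), which absorbs a factor
  ln N.  Hence S(N) = O(N^(1-a) / ln N).
\<close>

definition primes_le :: "nat \<Rightarrow> nat set" where
  "primes_le n = {p. prime p \<and> p \<le> n}"

lemma finite_primes_le [simp]: "finite (primes_le n)"
  unfolding primes_le_def by auto

lemma primes_le_Suc:
  "primes_le (Suc n) = (if prime (Suc n) then insert (Suc n) (primes_le n) else primes_le n)"
  unfolding primes_le_def by (auto simp: le_Suc_eq)

lemma Suc_notin_primes_le [simp]: "Suc n \<notin> primes_le n"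
  unfolding primes_le_def by simp

lemma primes_le_pos: "p \<in> primes_le n \<Longrightarrow> 0 < p"
  unfolding primes_le_def by (simp add: prime_gt_0_nat)

lemma prod_primes_dvd:
  fixes x :: "'a :: factorial_semiring_gcd"
  assumes "finite A" "\<And>p. p \<in> A \<Longrightarrow> prime p \<and> p dvd x"
  shows "\<Prod>A dvd x"
  using assms
proof (induction A rule: finite_induct)
  case empty
  then show ?case by simp
next
  case (insert p A)
  have p: "prime p" "p dvd x" using insert.prems by auto
  have "\<not> p dvd \<Prod>A"
  proof
    assume "p dvd \<Prod>A"
    then obtain q where "q \<in> A" "p dvd q"
      using prime_dvd_prod_iff[OF insert.hyps(1) p(1)] by auto
    then have "p = q" using insert.prems primes_dvd_imp_eq p(1) by blast
    with \<open>q \<in> A\<close> insert.hyps(2) show False by simp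
  qed
  then have "coprime p (\<Prod>A)" using p(1) prime_imp_coprime by blast
  moreover have "\<Prod>A dvd x" using insert.IH insert.prems by simp
  ultimately show ?case using insert.hyps p(2) by (simp add: divides_mult)
qed

lemma prod_primes_between_dvd_choose:
  "\<Prod>{p. prime p \<and> m + 1 < p \<and> p \<le> 2 * m + 1} dvd (2 * m + 1) choose m"
proof (rule prod_primes_dvd)
  fix p assume p: "p \<in> {p. prime p \<and> m + 1 < p \<and> p \<le> 2 * m + 1}"
  then have pr: "prime p" by simp
  have "fact m * fact (m + 1) * ((2 * m + 1) choose m) = (fact (2 * m + 1) :: nat)"
    using binomial_fact_lemma[of m "2 * m + 1"] by (simp add: ac_simps)
  moreover have "p dvd fact (2 * m + 1)" "\<not> p dvd fact m" "\<not> p dvd fact (m + 1)"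
    using p unfolding prime_dvd_fact_iff[OF pr] by auto
  ultimately have "p dvd (2 * m + 1) choose m"
    using pr prime_dvd_mult_iff by metis
  with pr show "prime p \<and> p dvd (2 * m + 1) choose m" ..
qed simp

lemma choose_middle_odd_le: "(2 * m + 1) choose m \<le> 4 ^ m"
proof -
  have "(2 * m + 1) choose m \<le> (\<Sum>k\<le>m. (2 * m + 1) choose k)"
    by (intro member_le_sum) auto
  also have "\<dots> = 2 ^ (2 * m)" by (rule binomial_r_part_sum)
  also have "\<dots> = 4 ^ m" by (simp add: power_mult)
  finally show ?thesis .
qed

lemma primorial_le_four_power: "\<Prod>(primes_le n) \<le> 4 ^ n"
proof (induction n rule: less_induct)
  case (less n)
  consider "n \<le> 2" | "2 < n" "even n" | m where "n = 2 * m + 1" "1 \<le> m"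
  proof (cases "even n")
    case False
    then obtain m where "n = 2 * m + 1" by (blast elim: oddE)
    then show ?thesis using that by (cases "m = 0") auto
  qed (use that in force)
  then show ?case
  proof cases
    case 1
    then have "n = 0 \<or> n = Suc 0 \<or> n = Suc (Suc 0)" by auto
    moreover have "primes_le 0 = {}" unfolding primes_le_def by (auto dest: prime_gt_0_nat)
    ultimately show ?thesis by (auto simp: primes_le_Suc)
  next
    case 2
    then have "\<not> prime n" using prime_odd_nat by auto
    then have "primes_le n = primes_le (n - 1)"
      using primes_le_Suc[of "n - 1"] 2 by simp
    then have "\<Prod>(primes_le n) \<le> 4 ^ (n - 1)" using less[of "n - 1"] 2 by simp
    also have "\<dots> \<le> 4 ^ n" by (intro power_increasing) auto
    finally show ?thesis .
  next
    case 3
    define Q where "Q = {p. prime p \<and> m + 1 < p \<and> p \<le> 2 * m + 1}"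
    have "primes_le n = primes_le (m + 1) \<union> Q" "primes_le (m + 1) \<inter> Q = {}"
      unfolding primes_le_def Q_def 3 by auto
    then have "\<Prod>(primes_le n) = \<Prod>(primes_le (m + 1)) * \<Prod>Q"
      by (simp add: prod.union_disjoint Q_def)
    also have "\<dots> \<le> 4 ^ (m + 1) * 4 ^ m"
    proof (rule mult_mono)
      show "\<Prod>(primes_le (m + 1)) \<le> 4 ^ (m + 1)" using less[of "m + 1"] 3 by simp
      have "\<Prod>Q \<le> (2 * m + 1) choose m"
        unfolding Q_def by (rule dvd_imp_le[OF prod_primes_between_dvd_choose]) simp
      then show "\<Prod>Q \<le> 4 ^ m" using choose_middle_odd_le order_trans by blast
    qed auto
    also have "\<dots> = 4 ^ n" by (simp add: 3 power_add[symmetric])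
    finally show ?thesis .
  qed
qed

definition chebyshev_theta :: "nat \<Rightarrow> real" where
  "chebyshev_theta n = (\<Sum>p\<in>primes_le n. ln (real p))"

lemma chebyshev_theta_Suc:
  "chebyshev_theta (Suc n) = chebyshev_theta n + (if prime (Suc n) then ln (real (Suc n)) else 0)"
  unfolding chebyshev_theta_def by (simp add: primes_le_Suc)

lemma chebyshev_theta_le: "chebyshev_theta n \<le> 2 * real n"
proof -
  have "real (\<Prod>(primes_le n)) \<le> real (4 ^ n)"
    by (simp only: of_nat_le_iff primorial_le_four_power)
  then have primorial_le: "(\<Prod>p\<in>primes_le n. real p) \<le> 4 ^ n" by simp
  have "chebyshev_theta n = ln (\<Prod>p\<in>primes_le n. real p)"
    unfolding chebyshev_theta_def by (simp add: ln_prod primes_le_pos)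
  also have "\<dots> \<le> ln (4 ^ n)"
    using primorial_le by (subst ln_le_cancel_iff) (auto simp: prod_pos primes_le_pos)
  also have "\<dots> = real n * (2 * ln 2)"
    by (simp add: ln_realpow ln_mult[of 2 2, simplified])
  also have "\<dots> \<le> 2 * real n" using ln_2_less_1 by (simp add: mult_left_le)
  finally show ?thesis .
qed

text \<open>
  Summation by parts against \<theta>: the invariant carries the boundary term
  g(N) (2N - \<theta>(N)), which is nonnegative by Chebyshev's bound.
\<close>
lemma sum_primes_ln_le_twice_sum:
  fixes g :: "nat \<Rightarrow> real"
  assumes nonneg: "\<And>n. 1 \<le> n \<Longrightarrow> 0 \<le> g n"
    and decreasing: "\<And>n. 1 \<le> n \<Longrightarrow> g (Suc n) \<le> g n"
  shows "(\<Sum>p\<in>primes_le N. g p * ln (real p)) \<le> 2 * (\<Sum>n=1..N. g n)"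
proof -
  have invariant: "(\<Sum>p\<in>primes_le N. g p * ln (real p)) + g N * (2 * real N - chebyshev_theta N)
      \<le> 2 * (\<Sum>n=1..N. g n)" for N
  proof (induction N)
    case 0
    then show ?case by (simp add: primes_le_def chebyshev_theta_def)
  next
    case (Suc N)
    have "g (Suc N) * (2 * real N - chebyshev_theta N) \<le> g N * (2 * real N - chebyshev_theta N)"
      using decreasing[of N] chebyshev_theta_le[of N]
      by (cases "N = 0") (auto simp: chebyshev_theta_def primes_le_def intro: mult_right_mono)
    moreover have "(\<Sum>p\<in>primes_le (Suc N). g p * ln (real p))
        = (\<Sum>p\<in>primes_le N. g p * ln (real p))
          + (if prime (Suc N) then g (Suc N) * ln (real (Suc N)) else 0)"
      by (simp add: primes_le_Suc)
    ultimately show ?case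
      using Suc.IH by (simp add: chebyshev_theta_Suc algebra_simps)
  qed
  have "0 \<le> g N * (2 * real N - chebyshev_theta N)"
    using nonneg[of N] chebyshev_theta_le[of N]
    by (cases "N = 0") (auto simp: chebyshev_theta_def primes_le_def)
  with invariant[of N] show ?thesis by linarith
qed

text \<open>Concavity of x^r, via the weighted AM-GM inequality applied to x/(x+1) and 1.\<close>
lemma powr_add_one_ge_tangent:
  fixes x r :: real
  assumes "0 \<le> x" "0 < r" "r \<le> 1"
  shows "x powr r + r * (x + 1) powr (r - 1) \<le> (x + 1) powr r"
proof (cases "x = 0")
  case True
  then show ?thesis using assms by simp
next
  case False
  define y where "y = x + 1"
  have xy: "0 < x" "0 < y" using False assms by (auto simp: y_def)
  have "(x / y) powr r * 1 powr (1 - r) \<le> r * (x / y) + (1 - r) * 1"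
    using assms xy by (intro Youngs_inequality_0) auto
  then have "(x / y) powr r * y powr r \<le> (r * (x / y) + (1 - r)) * y powr r"
    by (intro mult_right_mono) auto
  moreover have "(x / y) powr r * y powr r = x powr r" using xy by (simp add: powr_divide)
  moreover have "(r * (x / y) + (1 - r)) * y powr r = y powr r - r * y powr (r - 1)"
    using xy by (simp add: y_def powr_diff field_simps)
  ultimately have "x powr r + r * y powr (r - 1) \<le> y powr r" by linarith
  then show ?thesis unfolding y_def .
qed

lemma sum_powr_neg_le:
  fixes a :: real
  assumes "0 \<le> a" "a < 1"
  shows "(\<Sum>n=1..N. real n powr (-a)) \<le> real N powr (1 - a) / (1 - a)"
proof (induction N)
  case 0
  then show ?case by simp
next
  case (Suc N)
  have "real N powr (1 - a) + (1 - a) * real (Suc N) powr (-a) \<le> real (Suc N) powr (1 - a)"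
    using powr_add_one_ge_tangent[of "real N" "1 - a"] assms by (simp add: add.commute)
  with Suc.IH assms show ?case by (simp add: field_simps)
qed

lemma sum_primes_powr_ln_le:
  fixes a :: real
  assumes "0 \<le> a" "a < 1"
  shows "(\<Sum>p\<in>primes_le N. real p powr (-a) * ln (real p)) \<le> 2 * real N powr (1 - a) / (1 - a)"
proof -
  have "(\<Sum>p\<in>primes_le N. real p powr (-a) * ln (real p)) \<le> 2 * (\<Sum>n=1..N. real n powr (-a))"
    using assms by (intro sum_primes_ln_le_twice_sum) (auto intro: powr_mono2')
  also have "\<dots> \<le> 2 * real N powr (1 - a) / (1 - a)"
    using sum_powr_neg_le[OF assms, of N] by simp
  finally show ?thesis .
qed

lemma sum_primes_le_sqrt_powr_ln_le:
  fixes a :: real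
  assumes "0 \<le> a" "a < 1" "2 \<le> N"
  shows "(\<Sum>p\<in>primes_le N \<inter> {p. real p \<le> sqrt (real N)}. real p powr (-a)) * ln (real N)
           \<le> 2 / (1 - a)\<^sup>2 * real N powr (1 - a)"
proof -
  define M where "M = nat \<lfloor>sqrt (real N)\<rfloor>"
  have "primes_le N \<inter> {p. real p \<le> sqrt (real N)} \<subseteq> {1..M}"
    unfolding M_def primes_le_def by (auto simp: prime_ge_Suc_0_nat intro!: le_nat_floor)
  then have "(\<Sum>p\<in>primes_le N \<inter> {p. real p \<le> sqrt (real N)}. real p powr (-a))
      \<le> (\<Sum>n=1..M. real n powr (-a))"
    by (intro sum_mono2) auto
  also have "\<dots> \<le> real M powr (1 - a) / (1 - a)"
    using assms by (intro sum_powr_neg_le) auto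
  also have "\<dots> \<le> sqrt (real N) powr (1 - a) / (1 - a)"
    unfolding M_def using assms by (intro divide_right_mono powr_mono2) auto
  also have "\<dots> = real N powr ((1 - a) / 2) / (1 - a)"
    by (simp add: powr_half_sqrt[symmetric] powr_powr)
  finally have small: "(\<Sum>p\<in>primes_le N \<inter> {p. real p \<le> sqrt (real N)}. real p powr (-a))
      \<le> real N powr ((1 - a) / 2) / (1 - a)" .
  have "ln (real N) \<le> real N powr ((1 - a) / 2) / ((1 - a) / 2)"
    using assms by (intro ln_powr_bound) auto
  with small assms have "(\<Sum>p\<in>primes_le N \<inter> {p. real p \<le> sqrt (real N)}. real p powr (-a)) * ln (real N)
      \<le> real N powr ((1 - a) / 2) / (1 - a) * (real N powr ((1 - a) / 2) / ((1 - a) / 2))"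
    by (intro mult_mono) (auto intro: sum_nonneg)
  also have "\<dots> = 2 / (1 - a)\<^sup>2 * (real N powr ((1 - a) / 2) * real N powr ((1 - a) / 2))"
    using assms by (simp add: field_simps power2_eq_square)
  also have "\<dots> = 2 / (1 - a)\<^sup>2 * real N powr (1 - a)"
    by (simp add: powr_add[symmetric])
  finally show ?thesis .
qed

lemma sum_primes_gt_sqrt_powr_ln_le:
  fixes a :: real
  assumes "2 \<le> N"
  shows "(\<Sum>p\<in>primes_le N - {p. real p \<le> sqrt (real N)}. real p powr (-a)) * ln (real N)
           \<le> 2 * (\<Sum>p\<in>primes_le N. real p powr (-a) * ln (real p))"
proof -
  have "ln (real N) \<le> 2 * ln (real p)" if "sqrt (real N) < real p" for p
  proof -
    have "0 < sqrt (real N)" using assms by simp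
    with that have "ln (sqrt (real N)) \<le> ln (real p)"
      by (subst ln_le_cancel_iff) linarith+
    then show ?thesis using assms by (simp add: ln_sqrt)
  qed
  then have "(\<Sum>p\<in>primes_le N - {p. real p \<le> sqrt (real N)}. real p powr (-a)) * ln (real N)
      \<le> (\<Sum>p\<in>primes_le N - {p. real p \<le> sqrt (real N)}. real p powr (-a) * (2 * ln (real p)))"
    unfolding sum_distrib_right by (intro sum_mono mult_left_mono) auto
  also have "\<dots> \<le> 2 * (\<Sum>p\<in>primes_le N. real p powr (-a) * ln (real p))"
    unfolding sum_distrib_left mult.left_commute[of 2]
    by (intro sum_mono2) (auto simp: primes_le_def prime_ge_Suc_0_nat)
  finally show ?thesis .
qed

lemma sum_primes_powr_le:
  fixes a :: real
  assumes "0 \<le> a" "a < 1" "2 \<le> N"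
  shows "(\<Sum>p\<in>primes_le N. real p powr (-a))
           \<le> (2 / (1 - a)\<^sup>2 + 4 / (1 - a)) * real N powr (1 - a) / ln (real N)"
proof -
  have "(\<Sum>p\<in>primes_le N. real p powr (-a))
      = (\<Sum>p\<in>primes_le N \<inter> {p. real p \<le> sqrt (real N)}. real p powr (-a))
        + (\<Sum>p\<in>primes_le N - {p. real p \<le> sqrt (real N)}. real p powr (-a))"
    by (rule sum.Int_Diff) simp
  then have "(\<Sum>p\<in>primes_le N. real p powr (-a)) * ln (real N)
      \<le> 2 / (1 - a)\<^sup>2 * real N powr (1 - a) + 2 * (2 * real N powr (1 - a) / (1 - a))"
    using sum_primes_le_sqrt_powr_ln_le[OF assms] sum_primes_gt_sqrt_powr_ln_le[OF assms(3), of a]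
      sum_primes_powr_ln_le[OF assms(1,2), of N]
    by (simp add: distrib_right)
  moreover have "0 < ln (real N)" using assms by simp
  ultimately show ?thesis by (simp add: pos_le_divide_eq algebra_simps)
qed

theorem lemma2p1:
  fixes b c :: real
  assumes "b < 1/2" and "c > 0"
  shows "\<exists>C::real. \<forall>f::real \<Rightarrow> real.
           (\<forall>x\<ge>1. f x \<le> c * x powr b) \<longrightarrow>
           (\<forall>N::nat. N \<ge> 2 \<longrightarrow>
              (\<Sum>p\<in>{p::nat. prime p \<and> p \<le> N}. real p powr (-1/2) * f (real N / real p))
                \<le> C * sqrt (real N) / ln (real N))"
proof -
  define b' where "b' = max b 0"
  define a where "a = 1/2 + b'"
  define K where "K = 2 / (1 - a)\<^sup>2 + 4 / (1 - a)"
  have a: "0 \<le> a" "a < 1" using assms(1) by (auto simp: a_def b'_def)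
  show ?thesis
  proof (intro exI[of _ "c * K"] allI impI)
    fix f :: "real \<Rightarrow> real" and N :: nat
    assume f: "\<forall>x\<ge>1. f x \<le> c * x powr b" and N: "2 \<le> N"
    have term_le: "real p powr (-1/2) * f (real N / real p) \<le> c * real N powr b' * real p powr (-a)"
      if "p \<in> primes_le N" for p
    proof -
      have "0 < real p" "real p \<le> real N" using that by (auto simp: primes_le_def prime_gt_0_nat)
      then have "1 \<le> real N / real p" by simp
      then have "f (real N / real p) \<le> c * (real N / real p) powr b" using f by blast
      also have "\<dots> \<le> c * (real N / real p) powr b'"
        using \<open>1 \<le> real N / real p\<close> assms(2) by (intro mult_left_mono powr_mono) (auto simp: b'_def)
      finally have "real p powr (-1/2) * f (real N / real p)
          \<le> real p powr (-1/2) * (c * (real N / real p) powr b')"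
        by (intro mult_left_mono) auto
      also have "\<dots> = c * real N powr b' * real p powr (-a)"
        using \<open>0 < real p\<close> by (simp add: a_def powr_divide divide_powr_uminus powr_add[symmetric])
      finally show ?thesis .
    qed
    have "(\<Sum>p\<in>{p. prime p \<and> p \<le> N}. real p powr (-1/2) * f (real N / real p))
        \<le> c * real N powr b' * (\<Sum>p\<in>primes_le N. real p powr (-a))"
      unfolding sum_distrib_left primes_le_def[symmetric] by (rule sum_mono) (rule term_le)
    also have "\<dots> \<le> c * real N powr b' * (K * real N powr (1 - a) / ln (real N))"
      unfolding K_def using sum_primes_powr_le[OF a N] assms(2) by (intro mult_left_mono) auto
    also have "\<dots> = c * K * (real N powr b' * real N powr (1 - a)) / ln (real N)" by simp
    also have "real N powr b' * real N powr (1 - a) = sqrt (real N)"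
      by (simp add: a_def powr_add[symmetric] powr_half_sqrt)
    finally show "(\<Sum>p\<in>{p. prime p \<and> p \<le> N}. real p powr (-1/2) * f (real N / real p))
        \<le> c * K * sqrt (real N) / ln (real N)" .
  qed
qed

end
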